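(* Let $G$ be a finite group with $n=|G|$, and let $f_1,f_2:G\to\{0,1\}$ be sceneries. If $A_{f_1}(x_1,\dots,x_n)=A_{f_2}(x_1,\dots,x_n)$ for all $(x_1,\dots,x_n)\in G^n$, then $f_1$ is a shift of $f_2$, i.e. there exists $g\in G$ with $f_1(k)=f_2(kg)$ for all $k\in G$.
   Context: For a scenery $f:G\to\{0,1\}$, the multispectrum (with $n$ arguments) is $A_f(x_1,\dots,x_n)=\sum_{k\in G}f(k)f(x_1k)f(x_2x_1k)\cdots f(x_n\cdots x_1k)$ for $x_1,\dots,x_n\in G$. *)

theory Defs
  imports "HOL-Algebra.Group"
begin

definition scenery :: "('a, 'b) monoid_scheme \<Rightarrow> ('a \<Rightarrow> nat) \<Rightarrow> bool" where
  "scenery G f \<longleftrightarrow> (\<forall>k \<in> carrier G. f k \<in> {0, 1})"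

text \<open>Iterated left products: walk G x k 0 = k,
  walk G x k (j+1) = x_(j+1) * walk G x k j, where the arguments
  x_1,...,x_n are stored as x 0, ..., x (n-1).\<close>
fun walk :: "('a, 'b) monoid_scheme \<Rightarrow> (nat \<Rightarrow> 'a) \<Rightarrow> 'a \<Rightarrow> nat \<Rightarrow> 'a" where
  "walk G x k 0 = k"
| "walk G x k (Suc j) = x j \<otimes>\<^bsub>G\<^esub> walk G x k j"

definition multispectrum ::
  "('a, 'b) monoid_scheme \<Rightarrow> ('a \<Rightarrow> nat) \<Rightarrow> nat \<Rightarrow> (nat \<Rightarrow> 'a) \<Rightarrow> nat" where
  "multispectrum G f n x = (\<Sum>k \<in> carrier G. \<Prod>j \<in> {0..n}. f (walk G x k j))"

end

theory Submission
  imports Defs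
begin

text \<open>Choosing the arguments as increments \<open>x\<^sub>j = w\<^sub>j\<^sub>+\<^sub>1 w\<^sub>j\<^sup>-\<^sup>1\<close> of a sequence \<open>w\<close> with
  \<open>w\<^sub>0 = 1\<close>, the multispectrum of a scenery \<open>f\<close> with support \<open>S\<close> counts the \<open>k\<close> with
  \<open>w\<^sub>j k \<in> S\<close> for all \<open>j\<close>. Since \<open>n = |G|\<close> arguments suffice to let \<open>w\<close> run through any
  subset \<open>T \<ni> 1\<close> of \<open>G\<close>, equal multispectra give equally many right translates
  \<open>T k \<subseteq> S\<^sub>1\<close> and \<open>T k \<subseteq> S\<^sub>2\<close>. Taking \<open>T = {1}\<close> gives \<open>|S\<^sub>1| = |S\<^sub>2|\<close>; taking
  \<open>T = S\<^sub>1 s\<^sup>-\<^sup>1\<close> for some \<open>s \<in> S\<^sub>1\<close>, the translate \<open>T s = S\<^sub>1\<close> shows that some \<open>T k\<close>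
  lies in \<open>S\<^sub>2\<close>, and then \<open>S\<^sub>1 s\<^sup>-\<^sup>1 k = S\<^sub>2\<close> by counting, i.e. \<open>f\<^sub>1\<close> is the shift of \<open>f\<^sub>2\<close>
  by \<open>g = s\<^sup>-\<^sup>1 k\<close>.\<close>

definition scenery_support :: "('a, 'b) monoid_scheme \<Rightarrow> ('a \<Rightarrow> nat) \<Rightarrow> 'a set" where
  "scenery_support G f = {k \<in> carrier G. f k = 1}"

definition support_translators ::
  "('a, 'b) monoid_scheme \<Rightarrow> ('a \<Rightarrow> nat) \<Rightarrow> 'a set \<Rightarrow> 'a set" where
  "support_translators G f T = {k \<in> carrier G. \<forall>t\<in>T. f (t \<otimes>\<^bsub>G\<^esub> k) = 1}"

lemma prod_zero_one_eq_of_bool: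
  fixes h :: "'a \<Rightarrow> nat"
  assumes "finite A" and "\<forall>x\<in>A. h x \<in> {0, 1}"
  shows "(\<Prod>x\<in>A. h x) = of_bool (\<forall>x\<in>A. h x = 1)"
proof (cases "\<forall>x\<in>A. h x = 1")
  case False
  then obtain x where "x \<in> A" "h x = 0" using assms(2) by blast
  then have "(\<Prod>x\<in>A. h x) = 0" using assms(1) by (intro prod_zero) auto
  then show ?thesis using False by simp
qed simp

lemma ex_sequence_covering:
  assumes "finite T" and "a \<in> T" and "card T \<le> n"
  obtains w :: "nat \<Rightarrow> 'a" where "w 0 = a" and "\<And>j. w j \<in> T" and "T \<subseteq> w ` {0..n}"
proof -
  obtain h where h: "bij_betw h {0..<card T} T"
    using ex_bij_betw_nat_finite[OF assms(1)] by blast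
  define w where "w j = (if 0 < j \<and> j \<le> card T then h (j - 1) else a)" for j
  have "w j \<in> T" for j
    using h assms(2) unfolding w_def by (auto simp: bij_betw_def)
  moreover have "T \<subseteq> w ` {0..n}"
  proof
    fix t assume "t \<in> T"
    then obtain i where "i < card T" "t = h i"
      using h unfolding bij_betw_def by (metis atLeastLessThan_iff imageE)
    then have "t = w (Suc i)" and "Suc i \<in> {0..n}"
      using assms(3) unfolding w_def by auto
    then show "t \<in> w ` {0..n}" by blast
  qed
  ultimately show thesis using that[of w] unfolding w_def by simp
qed

context group
begin

lemma walk_increments:
  assumes "\<And>j. w j \<in> carrier G" and "w 0 = \<one>" and "k \<in> carrier G"
  shows "walk G (\<lambda>j. w (Suc j) \<otimes> inv (w j)) k j = w j \<otimes> k"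
proof (induction j)
  case (Suc j)
  have "inv (w j) \<otimes> (w j \<otimes> k) = k" using assms by (simp add: m_assoc[symmetric])
  then show ?case using Suc assms by (simp add: m_assoc)
qed (use assms in simp)

lemma multispectrum_increments:
  assumes "finite (carrier G)" and "scenery G f"
    and "\<And>j. w j \<in> carrier G" and "w 0 = \<one>"
  shows "multispectrum G f n (\<lambda>j. w (Suc j) \<otimes> inv (w j))
       = card {k \<in> carrier G. \<forall>j\<in>{0..n}. f (w j \<otimes> k) = 1}"
proof -
  have "(\<Prod>j\<in>{0..n}. f (walk G (\<lambda>j. w (Suc j) \<otimes> inv (w j)) k j))
      = of_bool (\<forall>j\<in>{0..n}. f (w j \<otimes> k) = 1)" if "k \<in> carrier G" for k
    using assms(2-4) that
    by (simp add: walk_increments prod_zero_one_eq_of_bool scenery_def)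
  then show ?thesis
    using assms(1) unfolding multispectrum_def by (simp add: Collect_conj_eq Int_commute)
qed

lemma card_support_translators_eq:
  assumes "finite (carrier G)" and "scenery G f1" and "scenery G f2"
    and "\<forall>x. (\<forall>i < card (carrier G). x i \<in> carrier G) \<longrightarrow>
           multispectrum G f1 (card (carrier G)) x = multispectrum G f2 (card (carrier G)) x"
    and "T \<subseteq> carrier G" and "\<one> \<in> T"
  shows "card (support_translators G f1 T) = card (support_translators G f2 T)"
proof -
  let ?n = "card (carrier G)"
  have "card T \<le> ?n" using assms(1,5) by (rule card_mono)
  then obtain w where w0: "w 0 = \<one>" and wT: "\<And>j. w j \<in> T" and cover: "T \<subseteq> w ` {0..?n}"
    using ex_sequence_covering[of T \<one>] finite_subset[OF assms(5,1)] assms(6) by blast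
  have wC: "w j \<in> carrier G" for j using wT assms(5) by blast
  have range_w: "w ` {0..?n} = T" using wT cover by blast
  have "support_translators G f T = {k \<in> carrier G. \<forall>j\<in>{0..?n}. f (w j \<otimes> k) = 1}"
    for f :: "'a \<Rightarrow> nat"
    unfolding support_translators_def by (subst range_w[symmetric]) auto
  moreover have "multispectrum G f1 ?n (\<lambda>j. w (Suc j) \<otimes> inv (w j))
               = multispectrum G f2 ?n (\<lambda>j. w (Suc j) \<otimes> inv (w j))"
    using assms(4) wC by simp
  ultimately show ?thesis
    using multispectrum_increments[where w = w, OF assms(1) assms(2) wC w0]
      multispectrum_increments[where w = w, OF assms(1) assms(3) wC w0] by simp
qed

lemma support_translators_one: "support_translators G f {\<one>} = scenery_support G f"
  unfolding support_translators_def scenery_support_def by auto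

lemma ex_r_translate_support_subset:
  assumes "finite (carrier G)"
    and translators_eq: "\<And>T. T \<subseteq> carrier G \<Longrightarrow> \<one> \<in> T \<Longrightarrow>
           card (support_translators G f1 T) = card (support_translators G f2 T)"
  obtains g where "g \<in> carrier G"
    and "(\<lambda>a. a \<otimes> g) ` scenery_support G f1 \<subseteq> scenery_support G f2"
proof (cases "scenery_support G f1 = {}")
  case False
  then obtain s where s: "s \<in> carrier G" "f1 s = 1" unfolding scenery_support_def by blast
  define T where "T = (\<lambda>t. t \<otimes> inv s) ` scenery_support G f1"
  have "T \<subseteq> carrier G" using s unfolding T_def scenery_support_def by auto
  moreover have "\<one> \<in> T"
    unfolding T_def scenery_support_def using s by (intro image_eqI[of _ _ s]) simp_all
  ultimately have card_eq: "card (support_translators G f1 T) = card (support_translators G f2 T)"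
    by (rule translators_eq)
  have "s \<in> support_translators G f1 T"
    using s unfolding support_translators_def T_def scenery_support_def by (auto simp: m_assoc)
  moreover have "finite (support_translators G f1 T)" "finite (support_translators G f2 T)"
    using assms(1) unfolding support_translators_def by simp_all
  ultimately have "card (support_translators G f2 T) \<noteq> 0" using card_eq by (auto simp: card_0_eq)
  then obtain k where k: "k \<in> support_translators G f2 T" by fastforce
  show thesis
  proof (rule that[of "inv s \<otimes> k"])
    show "(\<lambda>a. a \<otimes> (inv s \<otimes> k)) ` scenery_support G f1 \<subseteq> scenery_support G f2"
      using k s unfolding support_translators_def T_def scenery_support_def by (auto simp: m_assoc)
  qed (use s k in \<open>simp add: support_translators_def\<close>)
qed (use that[of \<one>] in simp)

lemma r_translate_eq_of_subset_card_eq: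
  assumes "finite B" and "A \<subseteq> carrier G" and "g \<in> carrier G"
    and "(\<lambda>a. a \<otimes> g) ` A \<subseteq> B" and "card A = card B"
  shows "(\<lambda>a. a \<otimes> g) ` A = B"
proof -
  have "inj_on (\<lambda>a. a \<otimes> g) A" using assms(2,3) by (intro inj_onI) (metis right_cancel subsetD)
  then show ?thesis using assms(1,4,5) by (simp add: card_subset_eq card_image)
qed

lemma shift_of_support_translate:
  assumes "scenery G f1" and "scenery G f2" and "g \<in> carrier G"
    and translate: "(\<lambda>a. a \<otimes> g) ` scenery_support G f1 = scenery_support G f2"
  shows "\<forall>k \<in> carrier G. f1 k = f2 (k \<otimes> g)"
proof
  fix k assume k: "k \<in> carrier G"
  have "f1 k = 1 \<longleftrightarrow> f2 (k \<otimes> g) = 1"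
  proof
    assume "f1 k = 1"
    then show "f2 (k \<otimes> g) = 1" using k translate unfolding scenery_support_def by blast
  next
    assume "f2 (k \<otimes> g) = 1"
    then have "k \<otimes> g \<in> (\<lambda>a. a \<otimes> g) ` scenery_support G f1"
      using k assms(3) translate unfolding scenery_support_def by simp
    then obtain a where "a \<in> carrier G" "f1 a = 1" "k \<otimes> g = a \<otimes> g"
      unfolding scenery_support_def by blast
    then show "f1 k = 1" using k assms(3) by simp
  qed
  moreover have "f1 k \<in> {0, 1}" "f2 (k \<otimes> g) \<in> {0, 1}"
    using assms(1-3) k unfolding scenery_def by simp_all
  ultimately show "f1 k = f2 (k \<otimes> g)" by auto
qed

end

theorem mainTheorem6:
  fixes G :: "('a, 'b) monoid_scheme" and f1 f2 :: "'a \<Rightarrow> nat"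
  assumes "group G" and "finite (carrier G)"
    and "scenery G f1" and "scenery G f2"
    and "\<forall>x. (\<forall>i < card (carrier G). x i \<in> carrier G) \<longrightarrow>
           multispectrum G f1 (card (carrier G)) x = multispectrum G f2 (card (carrier G)) x"
  shows "\<exists>g \<in> carrier G. \<forall>k \<in> carrier G. f1 k = f2 (k \<otimes>\<^bsub>G\<^esub> g)"
proof -
  interpret group G by fact
  note translators_eq = card_support_translators_eq[OF assms(2-5)]
  have card_eq: "card (scenery_support G f1) = card (scenery_support G f2)"
    using translators_eq[of "{\<one>\<^bsub>G\<^esub>}"] by (simp add: support_translators_one)
  have finite_support: "finite (scenery_support G f2)"
    using assms(2) unfolding scenery_support_def by simp
  obtain g where g: "g \<in> carrier G"
    and "(\<lambda>a. a \<otimes>\<^bsub>G\<^esub> g) ` scenery_support G f1 \<subseteq> scenery_support G f2"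
    using ex_r_translate_support_subset[OF assms(2) translators_eq] by blast
  then have "(\<lambda>a. a \<otimes>\<^bsub>G\<^esub> g) ` scenery_support G f1 = scenery_support G f2"
    using r_translate_eq_of_subset_card_eq[OF finite_support _ g] card_eq
    unfolding scenery_support_def by auto
  then show ?thesis using shift_of_support_translate[OF assms(3,4) g] g by blast
qed

end
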